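(* For every fixed $k,K\in\mathbf{N}$, the set $\{\pi\in S:\ \mathrm{al}(\pi)<K\ \&\ s_k(\pi)<K\}$ is well partially ordered by $\prec$.
   Context: $S_n$ is the set of permutations of $[n]$, $S=\bigcup_n S_n$; $\pi\prec\rho$ means $\rho$ has a subsequence order-isomorphic to $\pi$; $\pi|A$ is the permutation order-isomorphic to the subsequence of $\pi$ at positions in $A$. A partial order is a well partial order if it has no infinite strictly descending chains and no infinite antichains. Alternating: $\sigma(\{1,3,5,\dots\})>\sigma(\{2,4,6,\dots\})$. $\mathrm{al}(\pi)$ is the maximum length of an alternating $\sigma$ with $\sigma\prec\pi$ or $\sigma\prec\pi^{-1}$. For $\sigma\in S_n,\tau\in S_m$, $\sigma\oplus\tau\in S_{n+m}$ equals $\sigma(i)$ at $i\le n$ and $n+\tau(i-n)$ at $i>n$; $\sigma\ominus\tau$ equals $m+\sigma(i)$ at $i\le n$ and $\tau(i-n)$ at $i>n$. Up-(down-)indecomposable means not of the form $\sigma\oplus\tau$ ($\sigma\ominus\tau$) with both nonempty; $h^+(\pi)$ ($h^-(\pi)$) is the maximum length of a block in the unique decomposition of $\pi$ as a $\oplus$-sum of up-indecomposables ($\ominus$-sum of down-indecomposables). $H_k^\pm=\{\pi\in S:h^\pm(\pi)<k\}$. For $k\ge2$ and $\pi\in S_n$, $s_k(\pi)$ is the number $r$ of intervals in the greedy partition $I_1<\dots<I_r$ of $[n]$ where $I_1$ is the longest initial interval with $\pi|I_1\in H_k^+\cup H_k^-$, $I_2$ the longest following interval with $\pi|I_2\in H_k^+\cup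 H_k^-$, etc.; $s_1(\pi)=\infty$ by convention. *)

theory Defs
  imports Main "HOL-Library.Sublist" "HOL-Library.Extended_Nat"
begin

text \<open>Permutations of [n] are represented 0-based as lists: a list p is a permutation
of length n iff it is distinct and its entries are exactly 0,...,n-1.
Position i (0-based) of the list holds the value pi(i+1)-1.\<close>

definition is_perm :: "nat list \<Rightarrow> bool" where
  "is_perm p \<longleftrightarrow> distinct p \<and> set p = {0..<length p}"

definition order_iso :: "nat list \<Rightarrow> nat list \<Rightarrow> bool" where
  "order_iso xs ys \<longleftrightarrow> length xs = length ys \<and>
     (\<forall>i<length xs. \<forall>j<length xs. xs ! i < xs ! j \<longleftrightarrow> ys ! i < ys ! j)"

definition contains :: "nat list \<Rightarrow> nat list \<Rightarrow> bool" (infix "\<prec>" 50) where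
  "\<sigma> \<prec> \<pi> \<longleftrightarrow> (\<exists>ys. subseq ys \<pi> \<and> order_iso \<sigma> ys)"

definition std :: "nat list \<Rightarrow> nat list" where
  "std xs = map (\<lambda>x. card {y \<in> set xs. y < x}) xs"

definition inv_perm :: "nat list \<Rightarrow> nat list" where
  "inv_perm p = map (\<lambda>v. THE i. i < length p \<and> p ! i = v) [0..<length p]"

text \<open>Alternating: values at odd (1-based) positions all exceed values at even (1-based)
positions; with 0-based indices: even indices exceed odd indices.\<close>
definition alternating :: "nat list \<Rightarrow> bool" where
  "alternating \<sigma> \<longleftrightarrow> (\<forall>i<length \<sigma>. \<forall>j<length \<sigma>. even i \<and> odd j \<longrightarrow> \<sigma> ! j < \<sigma> ! i)"

definition al :: "nat list \<Rightarrow> nat" where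
  "al \<pi> = Max {length \<sigma> | \<sigma>. is_perm \<sigma> \<and> alternating \<sigma> \<and> (\<sigma> \<prec> \<pi> \<or> \<sigma> \<prec> inv_perm \<pi>)}"

definition dsum :: "nat list \<Rightarrow> nat list \<Rightarrow> nat list" where
  "dsum \<sigma> \<tau> = \<sigma> @ map (\<lambda>x. length \<sigma> + x) \<tau>"

definition ssum :: "nat list \<Rightarrow> nat list \<Rightarrow> nat list" where
  "ssum \<sigma> \<tau> = map (\<lambda>x. length \<tau> + x) \<sigma> @ \<tau>"

definition up_indec :: "nat list \<Rightarrow> bool" where
  "up_indec \<pi> \<longleftrightarrow> \<not> (\<exists>\<sigma> \<tau>. is_perm \<sigma> \<and> is_perm \<tau> \<and> \<sigma> \<noteq> [] \<and> \<tau> \<noteq> [] \<and> \<pi> = dsum \<sigma> \<tau>)"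

definition down_indec :: "nat list \<Rightarrow> bool" where
  "down_indec \<pi> \<longleftrightarrow> \<not> (\<exists>\<sigma> \<tau>. is_perm \<sigma> \<and> is_perm \<tau> \<and> \<sigma> \<noteq> [] \<and> \<tau> \<noteq> [] \<and> \<pi> = ssum \<sigma> \<tau>)"

text \<open>Decompositions of pi as a direct (resp. skew) sum of nonempty up- (resp. down-)
indecomposable blocks. Such a decomposition is unique; h+ and h- are the maximal block
lengths (0 for the empty permutation).\<close>
definition plus_decomp :: "nat list list \<Rightarrow> nat list \<Rightarrow> bool" where
  "plus_decomp bs \<pi> \<longleftrightarrow> (\<forall>b\<in>set bs. is_perm b \<and> b \<noteq> [] \<and> up_indec b) \<and> \<pi> = foldr dsum bs []"

definition minus_decomp :: "nat list list \<Rightarrow> nat list \<Rightarrow> bool" where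
  "minus_decomp bs \<pi> \<longleftrightarrow> (\<forall>b\<in>set bs. is_perm b \<and> b \<noteq> [] \<and> down_indec b) \<and> \<pi> = foldr ssum bs []"

definition h_plus :: "nat list \<Rightarrow> nat" where
  "h_plus \<pi> = Max (insert 0 {length b | b bs. plus_decomp bs \<pi> \<and> b \<in> set bs})"

definition h_minus :: "nat list \<Rightarrow> nat" where
  "h_minus \<pi> = Max (insert 0 {length b | b bs. minus_decomp bs \<pi> \<and> b \<in> set bs})"

definition H_plus :: "nat \<Rightarrow> nat list set" where
  "H_plus k = {\<pi>. is_perm \<pi> \<and> h_plus \<pi> < k}"

definition H_minus :: "nat \<Rightarrow> nat list set" where
  "H_minus k = {\<pi>. is_perm \<pi> \<and> h_minus \<pi> < k}"

definition greedy_len :: "nat \<Rightarrow> nat list \<Rightarrow> nat" where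
  "greedy_len k xs = Max {j. 1 \<le> j \<and> j \<le> length xs \<and> std (take j xs) \<in> H_plus k \<union> H_minus k}"

text \<open>Number of intervals of the greedy partition (fuel argument = length, which suffices
since every step removes at least one entry when k \<ge> 2).\<close>
fun greedy_count :: "nat \<Rightarrow> nat \<Rightarrow> nat list \<Rightarrow> nat" where
  "greedy_count 0 k xs = 0"
| "greedy_count (Suc f) k xs =
     (if xs = [] then 0 else Suc (greedy_count f k (drop (greedy_len k xs) xs)))"

definition s_k :: "nat \<Rightarrow> nat list \<Rightarrow> enat" where
  "s_k k \<pi> = (if k < 2 then \<infinity> else enat (greedy_count (length \<pi>) k \<pi>))"

definition wpo_on :: "('a \<Rightarrow> 'a \<Rightarrow> bool) \<Rightarrow> 'a set \<Rightarrow> bool" where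
  "wpo_on P A \<longleftrightarrow>
     (\<forall>x\<in>A. P x x) \<and>
     (\<forall>x\<in>A. \<forall>y\<in>A. P x y \<and> P y x \<longrightarrow> x = y) \<and>
     (\<forall>x\<in>A. \<forall>y\<in>A. \<forall>z\<in>A. P x y \<and> P y z \<longrightarrow> P x z) \<and>
     \<not> (\<exists>f :: nat \<Rightarrow> 'a. \<forall>i. f i \<in> A \<and> P (f (Suc i)) (f i) \<and> f (Suc i) \<noteq> f i) \<and>
     \<not> (\<exists>f :: nat \<Rightarrow> 'a. (\<forall>i. f i \<in> A) \<and> inj f \<and> (\<forall>i j. i \<noteq> j \<longrightarrow> \<not> P (f i) (f j)))"

end

theory Submission
  imports Defs "HOL-Library.Infinite_Set"
begin

text \<open>
  Cut \<pi> greedily into fewer than K segments whose patterns lie in \<open>H\<^sub>k\<^sup>+ \<union> H\<^sub>k\<^sup>-\<close>; each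
  segment is then an increasing or a decreasing sequence of pieces of length less than k.
  Colour every value by the segment containing it and read the colours in increasing order
  of values. For each pair of colours, an alternation hi lo hi lo ... in this colour word is an
  alternating pattern of \<open>\<pi>\<^sup>-\<^sup>1\<close>, so \<open>al \<pi> < K\<close> bounds the number of colour changes by \<open>K\<^sup>3\<close>.
  Tag each value with its run, the number of colour changes below it. Values in different
  segments compare as their runs do, and values in different pieces of one segment with
  equal runs compare according to the direction of the segment. Hence \<pi> is determined up to
  order isomorphism by the word of piece labels (pattern, runs, direction), which ranges over
  a finite alphabet, and a subword of labels gives a contained pattern. Higman's lemma rules
  out infinite antichains; descending chains are impossible because proper containment
  shortens permutations.
\<close>

section \<open>Higman's lemma for finite alphabets\<close>

definition bad_word_seq :: "'a set \<Rightarrow> (nat \<Rightarrow> 'a list) \<Rightarrow> bool" where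
  "bad_word_seq A f \<longleftrightarrow> (\<forall>i. set (f i) \<subseteq> A) \<and> (\<forall>i j. i < j \<longrightarrow> \<not> subseq (f i) (f j))"

definition bad_extensions :: "'a set \<Rightarrow> 'a list list \<Rightarrow> (nat \<Rightarrow> 'a list) set" where
  "bad_extensions A ws = {f. bad_word_seq A f \<and> (\<forall>j<length ws. f j = ws ! j)}"

definition shortest_bad_next :: "'a set \<Rightarrow> 'a list list \<Rightarrow> 'a list" where
  "shortest_bad_next A ws = (ARG_MIN length w. \<exists>f\<in>bad_extensions A ws. f (length ws) = w)"

text \<open>Nash-Williams' minimal bad sequence.\<close>

function minimal_bad_seq :: "'a set \<Rightarrow> nat \<Rightarrow> 'a list" where
  "minimal_bad_seq A n = shortest_bad_next A (map (minimal_bad_seq A) [0..<n])"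
  by auto
termination by (relation "measure snd") auto

declare minimal_bad_seq.simps [simp del]

lemma shortest_bad_next:
  assumes "f \<in> bad_extensions A ws"
  shows "\<exists>g\<in>bad_extensions A ws. g (length ws) = shortest_bad_next A ws"
    and "g \<in> bad_extensions A ws \<Longrightarrow> length (shortest_bad_next A ws) \<le> length (g (length ws))"
  using arg_min_nat_lemma[of "\<lambda>w. \<exists>f\<in>bad_extensions A ws. f (length ws) = w" "f (length ws)" length]
    assms unfolding shortest_bad_next_def by blast+

lemma bad_extensions_minimal_bad_seq:
  assumes "bad_word_seq A f"
  shows "\<exists>g. g \<in> bad_extensions A (map (minimal_bad_seq A) [0..<n])"
proof (induction n)
  case 0
  show ?case using assms by (auto simp: bad_extensions_def)
next
  case (Suc n)
  then obtain g where "g \<in> bad_extensions A (map (minimal_bad_seq A) [0..<n])"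
    "g n = minimal_bad_seq A n"
    using shortest_bad_next(1) by (fastforce simp: minimal_bad_seq.simps[of A n])
  then have "g \<in> bad_extensions A (map (minimal_bad_seq A) [0..<Suc n])"
    by (auto simp: bad_extensions_def less_Suc_eq nth_append)
  then show ?case by blast
qed

lemma minimal_bad_seq_bad:
  assumes "bad_word_seq A f"
  shows "bad_word_seq A (minimal_bad_seq A)"
  unfolding bad_word_seq_def
proof (intro conjI allI impI)
  fix i j :: nat
  obtain g where "g \<in> bad_extensions A (map (minimal_bad_seq A) [0..<Suc (max i j)])"
    using bad_extensions_minimal_bad_seq[OF assms] by blast
  then have "bad_word_seq A g" "g i = minimal_bad_seq A i" "g j = minimal_bad_seq A j"
    by (auto simp: bad_extensions_def less_Suc_eq_le simp del: upt_Suc)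
  then show "set (minimal_bad_seq A i) \<subseteq> A" and "i < j \<Longrightarrow> \<not> subseq (minimal_bad_seq A i) (minimal_bad_seq A j)"
    unfolding bad_word_seq_def by metis+
qed

lemma minimal_bad_seq_minimal:
  assumes "bad_word_seq A f" "bad_word_seq A g" "\<forall>j<n. g j = minimal_bad_seq A j"
  shows "length (minimal_bad_seq A n) \<le> length (g n)"
proof -
  obtain f' where "f' \<in> bad_extensions A (map (minimal_bad_seq A) [0..<n])"
    using bad_extensions_minimal_bad_seq[OF assms(1)] by blast
  moreover have "g \<in> bad_extensions A (map (minimal_bad_seq A) [0..<n])"
    using assms(2,3) by (simp add: bad_extensions_def)
  ultimately show ?thesis
    using shortest_bad_next(2) by (fastforce simp: minimal_bad_seq.simps[of A n])
qed

lemma bad_word_seq_drop_common_head: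
  assumes bad: "bad_word_seq A m" and \<phi>: "strict_mono \<phi>"
    and hd: "\<And>n. m (\<phi> n) = a # tl (m (\<phi> n))"
  shows "bad_word_seq A (\<lambda>j. if j < \<phi> 0 then m j else tl (m (\<phi> (j - \<phi> 0))))"
    (is "bad_word_seq A ?g")
  unfolding bad_word_seq_def
proof (intro conjI allI impI notI)
  fix i
  have "set (tl xs) \<subseteq> set xs" for xs :: "'a list"
    by (cases xs) auto
  then show "set (?g i) \<subseteq> A"
    using bad by (auto simp: bad_word_seq_def)
next
  fix i j :: nat
  assume "i < j" and sub: "subseq (?g i) (?g j)"
  define src where "src l = (if l < \<phi> 0 then l else \<phi> (l - \<phi> 0))" for l
  have "src i < src j"
    using \<open>i < j\<close> \<phi> strict_mono_less_eq[OF \<phi>, of 0 "j - \<phi> 0"]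
    by (auto simp: src_def strict_mono_less)
  moreover have "subseq (m (src i)) (m (src j))"
  proof (cases "j < \<phi> 0")
    case True
    then show ?thesis using sub \<open>i < j\<close> by (simp add: src_def)
  next
    case j: False
    show ?thesis
    proof (cases "i < \<phi> 0")
      case True
      then have "subseq (m i) (a # tl (m (\<phi> (j - \<phi> 0))))" using sub j by auto
      then show ?thesis using True j hd by (simp add: src_def)
    next
      case False
      then have "subseq (a # tl (m (\<phi> (i - \<phi> 0)))) (a # tl (m (\<phi> (j - \<phi> 0))))"
        using sub j by simp
      then show ?thesis using False j hd by (simp add: src_def)
    qed
  qed
  ultimately show False using bad by (auto simp: bad_word_seq_def)
qed

theorem higman:
  assumes "finite A"
  shows "\<not> bad_word_seq A f"
proof
  assume "bad_word_seq A f"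
  define m where "m = minimal_bad_seq A"
  have bad: "bad_word_seq A m"
    unfolding m_def by (rule minimal_bad_seq_bad) fact
  have ne: "m i \<noteq> []" for i
    using bad unfolding bad_word_seq_def by (metis lessI list_emb_Nil)
  have "range (\<lambda>i. hd (m i)) \<subseteq> A"
    using bad ne unfolding bad_word_seq_def by (meson image_subset_iff list.set_sel(1) subsetD)
  then obtain a where "infinite ((\<lambda>i. hd (m i)) -` {a})"
    using inf_img_fin_dom[OF finite_subset[OF _ assms] infinite_UNIV_nat] by blast
  then obtain \<phi> :: "nat \<Rightarrow> nat" where \<phi>: "strict_mono \<phi>" "\<And>n. hd (m (\<phi> n)) = a"
    using infinite_enumerate by blast
  have hd: "m (\<phi> n) = a # tl (m (\<phi> n))" for n
    using \<phi>(2) ne by (metis list.collapse)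
  define g where "g j = (if j < \<phi> 0 then m j else tl (m (\<phi> (j - \<phi> 0))))" for j
  have "length (m (\<phi> 0)) \<le> length (g (\<phi> 0))"
    unfolding m_def
    by (rule minimal_bad_seq_minimal[OF \<open>bad_word_seq A f\<close>])
      (use bad_word_seq_drop_common_head[OF bad \<phi>(1) hd] in \<open>auto simp: g_def m_def\<close>)
  then show False using ne[of "\<phi> 0"] by (cases "m (\<phi> 0)") (auto simp: g_def)
qed

section \<open>Pattern containment and standardisation\<close>

lemma order_iso_refl: "order_iso xs xs"
  and order_iso_sym: "order_iso xs ys \<Longrightarrow> order_iso ys xs"
  and order_iso_trans: "order_iso xs ys \<Longrightarrow> order_iso ys zs \<Longrightarrow> order_iso xs zs"
  unfolding order_iso_def by auto

lemma order_iso_length: "order_iso xs ys \<Longrightarrow> length xs = length ys"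
  unfolding order_iso_def by simp

lemma order_iso_shift: "order_iso (map (\<lambda>x. c + x) xs) xs"
  unfolding order_iso_def by simp

lemma order_iso_append_iff:
  assumes "length xs1 = length ys1"
  shows "order_iso (xs1 @ xs2) (ys1 @ ys2) \<longleftrightarrow> order_iso xs1 ys1 \<and> order_iso xs2 ys2 \<and>
    (\<forall>i<length xs1. \<forall>j<length xs2.
       (xs1 ! i < xs2 ! j \<longleftrightarrow> ys1 ! i < ys2 ! j) \<and> (xs2 ! j < xs1 ! i \<longleftrightarrow> ys2 ! j < ys1 ! i))"
    (is "?lhs \<longleftrightarrow> ?rhs")
proof
  assume ?lhs
  then have len: "length xs2 = length ys2" and
    iso: "\<And>i j. i < length (xs1 @ xs2) \<Longrightarrow> j < length (xs1 @ xs2) \<Longrightarrow>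
       (xs1 @ xs2) ! i < (xs1 @ xs2) ! j \<longleftrightarrow> (ys1 @ ys2) ! i < (ys1 @ ys2) ! j"
    using assms unfolding order_iso_def by auto
  have "order_iso xs1 ys1"
    unfolding order_iso_def
  proof (intro conjI allI impI)
    fix i j assume "i < length xs1" "j < length xs1"
    then show "xs1 ! i < xs1 ! j \<longleftrightarrow> ys1 ! i < ys1 ! j"
      using iso[of i j] assms by (simp add: nth_append)
  qed (fact assms)
  moreover have "order_iso xs2 ys2"
    unfolding order_iso_def
  proof (intro conjI allI impI)
    fix i j assume "i < length xs2" "j < length xs2"
    then show "xs2 ! i < xs2 ! j \<longleftrightarrow> ys2 ! i < ys2 ! j"
      using iso[of "length xs1 + i" "length xs1 + j"] assms by (simp add: nth_append)
  qed (fact len)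
  moreover have "(xs1 ! i < xs2 ! j \<longleftrightarrow> ys1 ! i < ys2 ! j) \<and> (xs2 ! j < xs1 ! i \<longleftrightarrow> ys2 ! j < ys1 ! i)"
    if "i < length xs1" "j < length xs2" for i j
    using that assms iso[of i "length xs1 + j"] iso[of "length xs1 + j" i] by (auto simp: nth_append)
  ultimately show ?rhs by blast
next
  assume ?rhs
  then show ?lhs
    using assms unfolding order_iso_def by (auto simp: nth_append)
qed

lemma order_iso_iff_zip:
  "order_iso xs ys \<longleftrightarrow> length xs = length ys \<and>
     (\<forall>p\<in>set (zip xs ys). \<forall>q\<in>set (zip xs ys). fst p < fst q \<longleftrightarrow> snd p < snd q)"
  unfolding order_iso_def set_zip by auto metis+

lemma subseq_mapE:
  assumes "subseq xs (map f ys)"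
  obtains zs where "subseq zs ys" "xs = map f zs"
  using assms
proof (induction ys arbitrary: xs thesis)
  case Nil
  then show ?case by (metis list.map(1) list_emb_Nil list_emb_Nil2)
next
  case (Cons y ys)
  show ?case
  proof (cases "xs \<noteq> [] \<and> hd xs = f y")
    case True
    then have "subseq (tl xs) (map f ys)"
      using Cons.prems(2) by (cases xs) auto
    then obtain zs where "subseq zs ys" "tl xs = map f zs" using Cons.IH by blast
    then show ?thesis using Cons.prems(1)[of "y # zs"] True by (cases xs) auto
  next
    case False
    then have "subseq xs (map f ys)" using Cons.prems(2) by (cases xs) auto
    then obtain zs where "subseq zs ys" "xs = map f zs" using Cons.IH by blast
    then show ?thesis using Cons.prems(1)[of zs] by auto
  qed
qed

lemma order_iso_subseq:
  assumes "order_iso xs ys" "subseq xs' xs"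
  obtains ys' where "subseq ys' ys" "order_iso xs' ys'"
proof -
  have len: "length xs = length ys" using assms(1) by (rule order_iso_length)
  then obtain zs where zs: "subseq zs (zip xs ys)" "xs' = map fst zs"
    using assms(2) by (metis map_fst_zip subseq_mapE)
  have "subseq (map snd zs) ys"
    using subseq_map[OF zs(1), of snd] len by simp
  moreover have "set zs \<subseteq> set (zip xs ys)"
    using zs(1) by (auto dest: list_emb_set)
  then have "order_iso (map fst zs) (map snd zs)"
    using assms(1) unfolding order_iso_iff_zip zip_map_fst_snd by auto
  ultimately show thesis using that zs(2) by blast
qed

lemma contains_refl: "\<sigma> \<prec> \<sigma>"
  unfolding contains_def using order_iso_refl by blast

lemma contains_trans: "\<rho> \<prec> \<sigma> \<Longrightarrow> \<sigma> \<prec> \<pi> \<Longrightarrow> \<rho> \<prec> \<pi>"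
  unfolding contains_def
  by (metis order_iso_subseq order_iso_trans subseq_order.trans)

lemma contains_length: "\<sigma> \<prec> \<pi> \<Longrightarrow> length \<sigma> \<le> length \<pi>"
  unfolding contains_def by (metis list_emb_length order_iso_length)

lemma std_length [simp]: "length (std xs) = length xs"
  unfolding std_def by simp

lemma std_nth: "i < length xs \<Longrightarrow> std xs ! i = card {y \<in> set xs. y < xs ! i}"
  unfolding std_def by simp

lemma order_iso_std: "order_iso xs (std xs)"
proof -
  have "card {y \<in> set xs. y < a} < card {y \<in> set xs. y < b}" if "a < b" "a \<in> set xs" for a b
    using that by (intro psubset_card_mono) auto
  moreover have "card {y \<in> set xs. y < a} \<le> card {y \<in> set xs. y < b}" if "a \<le> b" for a b
    using that by (intro card_mono) auto
  ultimately have "xs ! i < xs ! j \<longleftrightarrow> std xs ! i < std xs ! j"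
    if "i < length xs" "j < length xs" for i j
    using that by (cases "xs ! i < xs ! j") (auto simp: std_nth not_less leD)
  then show ?thesis unfolding order_iso_def by simp
qed

lemma std_less_length: "set (std xs) \<subseteq> {..<length xs}"
proof
  fix v assume "v \<in> set (std xs)"
  then obtain i where i: "i < length xs" "v = std xs ! i"
    by (metis in_set_conv_nth std_length)
  have "{y \<in> set xs. y < xs ! i} \<subset> set xs"
    using nth_mem[OF i(1)] by blast
  then have "card {y \<in> set xs. y < xs ! i} < card (set xs)"
    by (simp add: psubset_card_mono)
  also have "\<dots> \<le> length xs" by (rule card_length)
  finally show "v \<in> {..<length xs}" using i by (simp add: std_nth)
qed

lemma is_perm_std:
  assumes "distinct xs" shows "is_perm (std xs)"
proof -
  have "std xs ! i \<noteq> std xs ! j" if "i < length xs" "j < length xs" "i \<noteq> j" for i j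
  proof -
    have "xs ! i < xs ! j \<or> xs ! j < xs ! i"
      using assms that by (metis linorder_neqE_nat nth_eq_iff_index_eq)
    moreover have "xs ! i < xs ! j \<longleftrightarrow> std xs ! i < std xs ! j"
      "xs ! j < xs ! i \<longleftrightarrow> std xs ! j < std xs ! i"
      using order_iso_std[of xs] that unfolding order_iso_def by simp_all
    ultimately show ?thesis by auto
  qed
  then have "distinct (std xs)" by (simp add: distinct_conv_nth)
  moreover have "set (std xs) = {0..<length xs}"
    using std_less_length[of xs] \<open>distinct (std xs)\<close>
    by (intro card_subset_eq) (auto simp: distinct_card)
  ultimately show ?thesis unfolding is_perm_def by simp
qed

lemma std_perm_id: "is_perm p \<Longrightarrow> std p = p"
proof (rule nth_equalityI)
  fix i assume "is_perm p" "i < length (std p)"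
  then have "{y \<in> set p. y < p ! i} = {0..<p ! i}"
    unfolding is_perm_def by auto (metis atLeastLessThan_iff nth_mem order.strict_trans)
  then show "std p ! i = p ! i" using \<open>i < length (std p)\<close> by (simp add: std_nth)
qed simp

lemma std_eq_if_order_iso:
  assumes "order_iso xs ys" "distinct xs" "distinct ys"
  shows "std xs = std ys"
proof -
  have card_below: "card {y \<in> set zs. y < zs ! i} = card {j. j < length zs \<and> zs ! j < zs ! i}"
    if "distinct zs" for zs :: "nat list" and i
  proof -
    have "{y \<in> set zs. y < zs ! i} = (!) zs ` {j. j < length zs \<and> zs ! j < zs ! i}"
      by (auto simp: in_set_conv_nth)
    then show ?thesis
      using that by (simp add: card_image inj_on_def nth_eq_iff_index_eq)
  qed
  have "length xs = length ys" using assms(1) by (rule order_iso_length)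
  moreover have "{j. j < length xs \<and> xs ! j < xs ! i} = {j. j < length ys \<and> ys ! j < ys ! i}"
    if "i < length xs" for i
    using assms(1) that unfolding order_iso_def by auto
  ultimately show ?thesis
    using assms(2,3) by (intro nth_equalityI) (auto simp: std_nth card_below)
qed

lemma std_eq_imp_order_iso: "std xs = std ys \<Longrightarrow> order_iso xs ys"
  by (metis order_iso_std order_iso_sym order_iso_trans)

lemma perm_contains_same_length_eq:
  assumes "is_perm \<sigma>" "is_perm \<pi>" "\<sigma> \<prec> \<pi>" "length \<sigma> = length \<pi>"
  shows "\<sigma> = \<pi>"
proof -
  obtain ys where "subseq ys \<pi>" "order_iso \<sigma> ys"
    using assms(3) unfolding contains_def by blast
  moreover from this have "ys = \<pi>"
    using assms(4) by (metis order_iso_length subseq_same_length)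
  ultimately have "std \<sigma> = std \<pi>"
    using assms(1,2) by (intro std_eq_if_order_iso) (auto simp: is_perm_def)
  then show ?thesis using assms(1,2) by (simp add: std_perm_id)
qed

lemma contains_antisym: "is_perm \<sigma> \<Longrightarrow> is_perm \<pi> \<Longrightarrow> \<sigma> \<prec> \<pi> \<Longrightarrow> \<pi> \<prec> \<sigma> \<Longrightarrow> \<sigma> = \<pi>"
  by (simp add: contains_length le_antisym perm_contains_same_length_eq)

section \<open>Direct and skew sums\<close>

lemma length_dsum [simp]: "length (dsum s t) = length s + length t"
  and length_ssum [simp]: "length (ssum s t) = length s + length t"
  unfolding dsum_def ssum_def by simp_all

lemma dsum_Nil [simp]: "dsum s [] = s" "dsum [] t = t"
  and ssum_Nil [simp]: "ssum s [] = s" "ssum [] t = t"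
  unfolding dsum_def ssum_def by (simp_all add: map_idI)

lemma dsum_assoc: "dsum (dsum a b) c = dsum a (dsum b c)"
  and ssum_assoc: "ssum (ssum a b) c = ssum a (ssum b c)"
  unfolding dsum_def ssum_def by (simp_all add: ac_simps)

lemma is_perm_dsum:
  assumes "is_perm s" "is_perm t" shows "is_perm (dsum s t)"
proof -
  have "set (map (\<lambda>x. length s + x) t) = {length s..<length s + length t}"
    using assms(2) unfolding is_perm_def by (auto simp: image_iff)
  then show ?thesis
    using assms unfolding is_perm_def dsum_def by (auto simp: distinct_map)
qed

lemma is_perm_ssum:
  assumes "is_perm s" "is_perm t" shows "is_perm (ssum s t)"
proof -
  have "set (map (\<lambda>x. length t + x) s) = {length t..<length t + length s}"
    using assms(1) unfolding is_perm_def by (auto simp: image_iff)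
  then show ?thesis
    using assms unfolding is_perm_def ssum_def by (auto simp: distinct_map)
qed

lemma indecomposable_decomposition_exists:
  fixes op :: "nat list \<Rightarrow> nat list \<Rightarrow> nat list"
  assumes length_op: "\<And>s t. length (op s t) = length s + length t"
    and op_assoc: "\<And>a b c. op (op a b) c = op a (op b c)"
    and op_Nil: "\<And>a. op [] a = a" "\<And>a. op a [] = a"
    and "is_perm p"
  shows "\<exists>bs. (\<forall>b\<in>set bs. is_perm b \<and> b \<noteq> [] \<and>
      \<not> (\<exists>s t. is_perm s \<and> is_perm t \<and> s \<noteq> [] \<and> t \<noteq> [] \<and> b = op s t)) \<and>
    p = foldr op bs []"
  using \<open>is_perm p\<close>
proof (induction "length p" arbitrary: p rule: less_induct)
  case less
  let ?indec = "\<lambda>b. is_perm b \<and> b \<noteq> [] \<and>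
      \<not> (\<exists>s t. is_perm s \<and> is_perm t \<and> s \<noteq> [] \<and> t \<noteq> [] \<and> b = op s t)"
  have foldr_op_append: "foldr op (xs @ ys) [] = op (foldr op xs []) (foldr op ys [])" for xs ys
    by (induction xs) (simp_all add: op_Nil op_assoc del: foldr_append)
  show ?case
  proof (cases "p \<noteq> [] \<and> (\<exists>s t. is_perm s \<and> is_perm t \<and> s \<noteq> [] \<and> t \<noteq> [] \<and> p = op s t)")
    case True
    then obtain s t where st: "is_perm s" "is_perm t" "s \<noteq> []" "t \<noteq> []" "p = op s t"
      by blast
    then have "length s < length p" "length t < length p"
      by (simp_all add: length_op)
    obtain bs1 where "\<forall>b\<in>set bs1. ?indec b" "s = foldr op bs1 []"
      using less.hyps[OF \<open>length s < length p\<close> st(1)] by blast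
    moreover obtain bs2 where "\<forall>b\<in>set bs2. ?indec b" "t = foldr op bs2 []"
      using less.hyps[OF \<open>length t < length p\<close> st(2)] by blast
    ultimately show ?thesis
      using st(5) by (intro exI[of _ "bs1 @ bs2"]) (simp add: foldr_op_append ball_Un del: foldr_append)
  next
    case False
    show ?thesis
    proof (cases "p = []")
      case True
      then show ?thesis by (intro exI[of _ "[]"]) simp
    next
      case False
      then show ?thesis
        using less.prems \<open>\<not> (p \<noteq> [] \<and> _)\<close> by (intro exI[of _ "[p]"]) (simp add: op_Nil)
    qed
  qed
qed

lemma Max_insert_0_bounds:
  fixes S :: "nat set"
  assumes "\<And>x. x \<in> S \<Longrightarrow> x \<le> n"
  shows "Max (insert 0 S) \<le> n" and "y \<in> S \<Longrightarrow> y \<le> Max (insert 0 S)"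
proof -
  have "insert 0 S \<subseteq> {..n}" using assms by auto
  then have fin: "finite (insert 0 S)" by (rule finite_subset) simp
  show "Max (insert 0 S) \<le> n"
    using \<open>insert 0 S \<subseteq> {..n}\<close> fin by (simp add: Max_le_iff subset_eq)
  show "y \<in> S \<Longrightarrow> y \<le> Max (insert 0 S)"
    by (rule Max_ge[OF fin]) simp
qed

lemma length_foldr_dsum: "length (foldr dsum bs []) = sum_list (map length bs)"
  and length_foldr_ssum: "length (foldr ssum bs []) = sum_list (map length bs)"
  by (induction bs) simp_all

lemma plus_decomp_block_le: "plus_decomp bs p \<Longrightarrow> b \<in> set bs \<Longrightarrow> length b \<le> length p"
  unfolding plus_decomp_def by (simp add: length_foldr_dsum member_le_sum_list)

lemma minus_decomp_block_le: "minus_decomp bs p \<Longrightarrow> b \<in> set bs \<Longrightarrow> length b \<le> length p"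
  unfolding minus_decomp_def by (simp add: length_foldr_ssum member_le_sum_list)

lemma h_plus_le_length: "h_plus p \<le> length p"
  unfolding h_plus_def by (rule Max_insert_0_bounds(1)) (auto dest: plus_decomp_block_le)

lemma H_plus_imp_blocks:
  assumes "p \<in> H_plus k"
  shows "\<exists>bs. p = foldr dsum bs [] \<and> (\<forall>b\<in>set bs. is_perm b \<and> length b < k)"
proof -
  have "is_perm p" "h_plus p < k" using assms unfolding H_plus_def by simp_all
  then obtain bs where bs: "plus_decomp bs p"
    using indecomposable_decomposition_exists[of dsum] length_dsum dsum_assoc dsum_Nil
    unfolding plus_decomp_def up_indec_def by blast
  have "length b \<le> h_plus p" if "b \<in> set bs" for b
    unfolding h_plus_def using bs that
    by (intro Max_insert_0_bounds(2)[of _ "length p"]) (auto dest: plus_decomp_block_le)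
  then show ?thesis
    using bs \<open>h_plus p < k\<close> unfolding plus_decomp_def by (intro exI[of _ bs]) force
qed

lemma H_minus_imp_blocks:
  assumes "p \<in> H_minus k"
  shows "\<exists>bs. p = foldr ssum bs [] \<and> (\<forall>b\<in>set bs. is_perm b \<and> length b < k)"
proof -
  have "is_perm p" "h_minus p < k" using assms unfolding H_minus_def by simp_all
  then obtain bs where bs: "minus_decomp bs p"
    using indecomposable_decomposition_exists[of ssum] length_ssum ssum_assoc ssum_Nil
    unfolding minus_decomp_def down_indec_def by blast
  have "length b \<le> h_minus p" if "b \<in> set bs" for b
    unfolding h_minus_def using bs that
    by (intro Max_insert_0_bounds(2)[of _ "length p"]) (auto dest: minus_decomp_block_le)
  then show ?thesis
    using bs \<open>h_minus p < k\<close> unfolding minus_decomp_def by (intro exI[of _ bs]) force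
qed

lemma std_shift: "distinct xs \<Longrightarrow> std (map (\<lambda>x. c + x) xs) = std xs"
  by (intro std_eq_if_order_iso order_iso_shift) (simp_all add: distinct_map)

lemma std_split_append:
  assumes "distinct xs" "order_iso xs (u @ v)" "distinct (u @ v)"
  shows "std (take (length u) xs) = std u" "std (drop (length u) xs) = std v"
    and "\<forall>i<length u. \<forall>j<length v. take (length u) xs ! i < drop (length u) xs ! j \<longleftrightarrow> u ! i < v ! j"
proof -
  have "length xs = length u + length v"
    using assms(2) by (simp add: order_iso_length)
  then have "order_iso (take (length u) xs) u \<and> order_iso (drop (length u) xs) v \<and>
    (\<forall>i<length u. \<forall>j<length v. take (length u) xs ! i < drop (length u) xs ! j \<longleftrightarrow> u ! i < v ! j)"
    using assms(2) order_iso_append_iff[of "take (length u) xs" u "drop (length u) xs" v] by simp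
  then show "std (take (length u) xs) = std u" "std (drop (length u) xs) = std v"
    and "\<forall>i<length u. \<forall>j<length v. take (length u) xs ! i < drop (length u) xs ! j \<longleftrightarrow> u ! i < v ! j"
    using assms(1,3) by (auto intro: std_eq_if_order_iso)
qed

lemma std_dsum_split:
  assumes "distinct xs" "std xs = dsum s t" "is_perm s" "is_perm t"
  shows "std (take (length s) xs) = s \<and> std (drop (length s) xs) = t \<and>
    (\<forall>x\<in>set (take (length s) xs). \<forall>y\<in>set (drop (length s) xs). x < y)"
proof -
  let ?t' = "map (\<lambda>x. length s + x) t"
  have iso: "order_iso xs (s @ ?t')"
    using order_iso_std[of xs] assms(2) by (simp add: dsum_def)
  have dist: "distinct (s @ ?t')"
    using is_perm_dsum[OF assms(3,4)] by (simp add: is_perm_def dsum_def)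
  note split = std_split_append[OF assms(1) iso dist]
  have "length xs = length s + length t"
    using arg_cong[OF assms(2), of length] by simp
  moreover have "s ! i < length s + t ! j" if "i < length s" for i j
    using assms(3) nth_mem[OF that] by (auto simp: is_perm_def)
  ultimately have "\<forall>x\<in>set (take (length s) xs). \<forall>y\<in>set (drop (length s) xs). x < y"
    using split(3) by (fastforce simp: in_set_conv_nth)
  moreover have "std s = s" "std ?t' = t"
    using assms(3,4) by (simp_all add: std_shift std_perm_id is_perm_def)
  ultimately show ?thesis using split(1,2) by simp
qed

lemma std_ssum_split:
  assumes "distinct xs" "std xs = ssum s t" "is_perm s" "is_perm t"
  shows "std (take (length s) xs) = s \<and> std (drop (length s) xs) = t \<and>
    (\<forall>x\<in>set (take (length s) xs). \<forall>y\<in>set (drop (length s) xs). y < x)"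
proof -
  let ?s' = "map (\<lambda>x. length t + x) s"
  have iso: "order_iso xs (?s' @ t)"
    using order_iso_std[of xs] assms(2) by (simp add: ssum_def)
  have dist: "distinct (?s' @ t)"
    using is_perm_ssum[OF assms(3,4)] by (simp add: is_perm_def ssum_def)
  note split = std_split_append[OF assms(1) iso dist]
  have "length xs = length s + length t"
    using arg_cong[OF assms(2), of length] by simp
  moreover have "\<not> length t + s ! i < t ! j" if "j < length t" for i j
    using assms(4) nth_mem[OF that] by (auto simp: is_perm_def)
  ultimately have not_less: "\<forall>x\<in>set (take (length s) xs). \<forall>y\<in>set (drop (length s) xs). \<not> x < y"
    using split(3) by (fastforce simp: in_set_conv_nth)
  have "set (take (length s) xs) \<inter> set (drop (length s) xs) = {}"
    using assms(1) by (metis append_take_drop_id distinct_append)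
  with not_less have "\<forall>x\<in>set (take (length s) xs). \<forall>y\<in>set (drop (length s) xs). y < x"
    by (auto simp: disjoint_iff not_less_iff_gr_or_eq)
  moreover have "std ?s' = s" "std t = t"
    using assms(3,4) by (simp_all add: std_shift std_perm_id is_perm_def)
  ultimately show ?thesis using split(1,2) by simp
qed

lemma std_foldr_split:
  fixes op :: "nat list \<Rightarrow> nat list \<Rightarrow> nat list" and R :: "nat \<Rightarrow> nat \<Rightarrow> bool"
  assumes split: "\<And>xs s t. distinct xs \<Longrightarrow> std xs = op s t \<Longrightarrow> is_perm s \<Longrightarrow> is_perm t \<Longrightarrow>
      std (take (length s) xs) = s \<and> std (drop (length s) xs) = t \<and>
      (\<forall>x\<in>set (take (length s) xs). \<forall>y\<in>set (drop (length s) xs). R x y)"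
    and is_perm_op: "\<And>s t. is_perm s \<Longrightarrow> is_perm t \<Longrightarrow> is_perm (op s t)"
  shows "distinct xs \<Longrightarrow> std xs = foldr op bs [] \<Longrightarrow> \<forall>b\<in>set bs. is_perm b \<Longrightarrow>
    \<exists>ps. xs = concat ps \<and> map std ps = bs \<and> sorted_wrt (\<lambda>p q. \<forall>x\<in>set p. \<forall>y\<in>set q. R x y) ps"
proof (induction bs arbitrary: xs)
  case Nil
  then show ?case by (intro exI[of _ "[]"]) (simp flip: length_0_conv)
next
  case (Cons b bs)
  have "is_perm []" by (simp add: is_perm_def)
  then have "is_perm (foldr op bs [])"
    using Cons.prems(3) by (induction bs) (simp_all add: is_perm_op)
  then have b: "std (take (length b) xs) = b" and rest: "std (drop (length b) xs) = foldr op bs []"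
    and cross: "\<forall>x\<in>set (take (length b) xs). \<forall>y\<in>set (drop (length b) xs). R x y"
    using split[of xs b] Cons.prems by auto
  obtain ps where ps: "drop (length b) xs = concat ps" "map std ps = bs"
    "sorted_wrt (\<lambda>p q. \<forall>x\<in>set p. \<forall>y\<in>set q. R x y) ps"
    using Cons.IH[OF _ rest] Cons.prems(1,3) by auto
  have "xs = concat (take (length b) xs # ps)"
    using ps(1) by (metis append_take_drop_id concat.simps(2))
  moreover have "sorted_wrt (\<lambda>p q. \<forall>x\<in>set p. \<forall>y\<in>set q. R x y) (take (length b) xs # ps)"
    using ps(1,3) cross by simp
  ultimately show ?case
    using b ps(2) by (intro exI[of _ "take (length b) xs # ps"]) simp
qed

definition monotone_pieces :: "nat \<Rightarrow> nat list \<Rightarrow> nat list list \<times> bool \<Rightarrow> bool" where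
  "monotone_pieces k s d \<longleftrightarrow> concat (fst d) = s \<and> (\<forall>p\<in>set (fst d). length p < k) \<and>
     sorted_wrt (\<lambda>p q. \<forall>x\<in>set p. \<forall>y\<in>set q. if snd d then x < y else y < x) (fst d)"

lemma H_imp_monotone_pieces:
  assumes "distinct s" "std s \<in> H_plus k \<union> H_minus k"
  shows "\<exists>d. monotone_pieces k s d"
  using assms(2)
proof
  assume "std s \<in> H_plus k"
  then obtain bs where bs: "std s = foldr dsum bs []" "\<forall>b\<in>set bs. is_perm b \<and> length b < k"
    using H_plus_imp_blocks by blast
  then obtain ps where "s = concat ps" "map std ps = bs"
    "sorted_wrt (\<lambda>p q. \<forall>x\<in>set p. \<forall>y\<in>set q. x < y) ps"
    using std_foldr_split[of dsum "(<)"] std_dsum_split is_perm_dsum assms(1) by blast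
  then have "monotone_pieces k s (ps, True)"
    using bs(2) by (auto simp: monotone_pieces_def)
  then show ?thesis ..
next
  assume "std s \<in> H_minus k"
  then obtain bs where bs: "std s = foldr ssum bs []" "\<forall>b\<in>set bs. is_perm b \<and> length b < k"
    using H_minus_imp_blocks by blast
  then obtain ps where "s = concat ps" "map std ps = bs"
    "sorted_wrt (\<lambda>p q. \<forall>x\<in>set p. \<forall>y\<in>set q. y < x) ps"
    using std_foldr_split[of ssum "\<lambda>x y. y < x"] std_ssum_split is_perm_ssum assms(1) by blast
  then have "monotone_pieces k s (ps, False)"
    using bs(2) by (auto simp: monotone_pieces_def)
  then show ?thesis ..
qed

section \<open>The greedy partition\<close>

lemma greedy_len_bounds:
  assumes "2 \<le> k" "xs \<noteq> []"
  shows "1 \<le> greedy_len k xs \<and> greedy_len k xs \<le> length xs \<and>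
    std (take (greedy_len k xs) xs) \<in> H_plus k \<union> H_minus k"
proof -
  let ?J = "{j. 1 \<le> j \<and> j \<le> length xs \<and> std (take j xs) \<in> H_plus k \<union> H_minus k}"
  have "is_perm (std [hd xs])" "h_plus (std [hd xs]) \<le> 1"
    using is_perm_std[of "[hd xs]"] h_plus_le_length[of "std [hd xs]"] by simp_all
  then have "1 \<in> ?J"
    using assms by (cases xs) (auto simp: H_plus_def)
  moreover have "finite ?J" by (rule finite_subset[of _ "{..length xs}"]) auto
  ultimately have "Max ?J \<in> ?J" by (intro Max_in) auto
  then show ?thesis unfolding greedy_len_def by simp
qed

lemma greedy_partition:
  assumes "2 \<le> k" "length xs \<le> f"
  shows "\<exists>segs. length segs = greedy_count f k xs \<and> concat segs = xs \<and>
    (\<forall>s\<in>set segs. std s \<in> H_plus k \<union> H_minus k)"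
  using assms(2)
proof (induction f arbitrary: xs)
  case 0
  then show ?case by (intro exI[of _ "[]"]) simp
next
  case (Suc f)
  show ?case
  proof (cases "xs = []")
    case True
    then show ?thesis by (intro exI[of _ "[]"]) simp
  next
    case False
    let ?g = "greedy_len k xs"
    have g: "1 \<le> ?g" "std (take ?g xs) \<in> H_plus k \<union> H_minus k"
      using greedy_len_bounds[OF assms(1) False] by simp_all
    have "length (drop ?g xs) \<le> f"
      using Suc.prems g(1) by simp
    then obtain segs where "length segs = greedy_count f k (drop ?g xs)"
      "concat segs = drop ?g xs" "\<forall>s\<in>set segs. std s \<in> H_plus k \<union> H_minus k"
      using Suc.IH by blast
    then show ?thesis
      using g False by (intro exI[of _ "take ?g xs # segs"]) simp
  qed
qed

section \<open>Tagged blocks\<close>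

text \<open>A block is a list of entries (value, run) with a direction.\<close>

type_synonym tagged_block = "(nat \<times> nat) list \<times> bool"

definition block_label :: "tagged_block \<Rightarrow> nat list \<times> nat list \<times> bool" where
  "block_label b = (std (map fst (fst b)), map snd (fst b), snd b)"

definition run_less :: "bool \<Rightarrow> nat \<Rightarrow> nat \<Rightarrow> bool" where
  "run_less sg r r' \<longleftrightarrow> (if r = r' then sg else r < r')"

definition blocks_compatible :: "tagged_block \<Rightarrow> tagged_block \<Rightarrow> bool" where
  "blocks_compatible a b \<longleftrightarrow>
     (\<forall>p\<in>set (fst a). \<forall>q\<in>set (fst b). fst p < fst q \<longleftrightarrow> run_less (snd a) (snd p) (snd q))"

definition tagged_entries :: "tagged_block list \<Rightarrow> (nat \<times> nat) list" where
  "tagged_entries P = concat (map fst P)"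

definition well_tagged :: "tagged_block list \<Rightarrow> bool" where
  "well_tagged P \<longleftrightarrow> sorted_wrt blocks_compatible P \<and> distinct (map fst (tagged_entries P))"

lemma tagged_entries_simps [simp]:
  "tagged_entries [] = []" "tagged_entries (a # P) = fst a @ tagged_entries P"
  unfolding tagged_entries_def by simp_all

lemma subseq_sorted_wrt: "subseq xs ys \<Longrightarrow> sorted_wrt R ys \<Longrightarrow> sorted_wrt R xs"
  by (induction rule: list_emb.induct) (auto dest: list_emb_set)

lemma subseq_distinct: "subseq xs ys \<Longrightarrow> distinct ys \<Longrightarrow> distinct xs"
  by (metis distinct_nthsI subseq_conv_nths)

lemma subseq_concat_map: "subseq xs ys \<Longrightarrow> subseq (concat (map f xs)) (concat (map f ys))"
  by (induction rule: list_emb.induct) (auto intro: list_emb_append2 list_emb_append_mono)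

lemma well_tagged_subseq: "subseq P' P \<Longrightarrow> well_tagged P \<Longrightarrow> well_tagged P'"
  unfolding well_tagged_def tagged_entries_def
  by (metis map_concat subseq_concat_map subseq_distinct subseq_map subseq_sorted_wrt)

lemma distinct_append_nth_neq:
  "distinct (xs @ ys) \<Longrightarrow> i < length xs \<Longrightarrow> j < length ys \<Longrightarrow> xs ! i \<noteq> ys ! j"
  by (auto dest: nth_mem)

lemma same_labels_same_runs:
  "map block_label P = map block_label Q \<Longrightarrow> map snd (tagged_entries P) = map snd (tagged_entries Q)"
proof (induction P arbitrary: Q)
  case (Cons a P)
  then obtain b Q' where "Q = b # Q'" by (cases Q) auto
  then show ?case using Cons by (simp add: block_label_def)
qed simp

lemma blocks_compatible_entries:
  assumes "sorted_wrt blocks_compatible (a # P)"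
  shows "\<forall>p\<in>set (fst a). \<forall>q\<in>set (tagged_entries P). fst p < fst q \<longleftrightarrow> run_less (snd a) (snd p) (snd q)"
  using assms unfolding blocks_compatible_def tagged_entries_def by fastforce

lemma same_labels_first_block_compare:
  assumes "well_tagged (a # P)" "well_tagged (b # Q)"
    and "block_label a = block_label b" "map block_label P = map block_label Q"
    and i: "i < length (fst a)" and j: "j < length (tagged_entries P)"
  shows "fst (fst a ! i) < fst (tagged_entries P ! j) \<longleftrightarrow> fst (fst b ! i) < fst (tagged_entries Q ! j)"
proof -
  have runs: "map snd (fst a) = map snd (fst b)" "map snd (tagged_entries P) = map snd (tagged_entries Q)"
    and sign: "snd a = snd b"
    using assms(3) same_labels_same_runs[OF assms(4)] by (simp_all add: block_label_def)
  have i': "i < length (fst b)" and j': "j < length (tagged_entries Q)"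
    using i j arg_cong[OF runs(1), of length] arg_cong[OF runs(2), of length] by simp_all
  have "snd (fst a ! i) = snd (fst b ! i)" "snd (tagged_entries P ! j) = snd (tagged_entries Q ! j)"
    using nth_map[of i "fst a" snd] nth_map[of i "fst b" snd] nth_map[of j "tagged_entries P" snd]
      nth_map[of j "tagged_entries Q" snd] runs i j i' j' by simp_all
  moreover have "\<forall>p\<in>set (fst a). \<forall>q\<in>set (tagged_entries P). fst p < fst q \<longleftrightarrow> run_less (snd a) (snd p) (snd q)"
    "\<forall>p\<in>set (fst b). \<forall>q\<in>set (tagged_entries Q). fst p < fst q \<longleftrightarrow> run_less (snd b) (snd p) (snd q)"
    using assms(1,2) blocks_compatible_entries unfolding well_tagged_def by blast+
  ultimately show ?thesis
    using nth_mem[OF i] nth_mem[OF j] nth_mem[OF i'] nth_mem[OF j'] sign by simp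
qed

lemma same_labels_order_iso:
  "well_tagged P \<Longrightarrow> well_tagged Q \<Longrightarrow> map block_label P = map block_label Q \<Longrightarrow>
   order_iso (map fst (tagged_entries P)) (map fst (tagged_entries Q))"
proof (induction P arbitrary: Q)
  case Nil
  then show ?case by (simp add: order_iso_def)
next
  case (Cons a P)
  then obtain b Q' where Q: "Q = b # Q'" by (cases Q) auto
  have labels: "block_label a = block_label b" "map block_label P = map block_label Q'"
    using Cons.prems(3) Q by simp_all
  have wt: "well_tagged (a # P)" "well_tagged (b # Q')" "well_tagged P" "well_tagged Q'"
    using Cons.prems(1,2) Q unfolding well_tagged_def by auto
  let ?A = "map fst (fst a)" and ?B = "map fst (tagged_entries P)"
    and ?A' = "map fst (fst b)" and ?B' = "map fst (tagged_entries Q')"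
  have head: "order_iso ?A ?A'"
    using labels(1) by (intro std_eq_imp_order_iso) (simp add: block_label_def)
  have "length ?B = length ?B'"
    using Cons.IH[OF wt(3,4) labels(2)] by (rule order_iso_length)
  moreover have dist: "distinct (?A @ ?B)" "distinct (?A' @ ?B')"
    using wt(1,2) unfolding well_tagged_def by simp_all
  ultimately have "(?A ! i < ?B ! j \<longleftrightarrow> ?A' ! i < ?B' ! j) \<and> (?B ! j < ?A ! i \<longleftrightarrow> ?B' ! j < ?A' ! i)"
    if i: "i < length ?A" and j: "j < length ?B" for i j
  proof -
    have "i < length ?A'" using i order_iso_length[OF head] by simp
    then have "?A ! i < ?B ! j \<longleftrightarrow> ?A' ! i < ?B' ! j"
      using same_labels_first_block_compare[OF wt(1,2) labels, of i j] i j \<open>length ?B = length ?B'\<close>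
      by simp
    moreover have "?A ! i \<noteq> ?B ! j" "?A' ! i \<noteq> ?B' ! j"
      using distinct_append_nth_neq[OF dist(1) i j] distinct_append_nth_neq[OF dist(2)]
        \<open>i < length ?A'\<close> j \<open>length ?B = length ?B'\<close> by simp_all
    ultimately show ?thesis by auto
  qed
  then have "order_iso (?A @ ?B) (?A' @ ?B')"
    unfolding order_iso_append_iff[OF order_iso_length[OF head]]
    using head Cons.IH[OF wt(3,4) labels(2)] by simp
  then show ?case using Q by simp
qed

theorem well_tagged_contains:
  assumes "well_tagged P" "well_tagged Q" "subseq (map block_label Q) (map block_label P)"
  shows "map fst (tagged_entries Q) \<prec> map fst (tagged_entries P)"
proof -
  obtain P' where P': "subseq P' P" "map block_label Q = map block_label P'"
    using assms(3) by (erule subseq_mapE)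
  have "order_iso (map fst (tagged_entries Q)) (map fst (tagged_entries P'))"
    using same_labels_order_iso[OF assms(2) well_tagged_subseq[OF P'(1) assms(1)] P'(2)] .
  moreover have "subseq (map fst (tagged_entries P')) (map fst (tagged_entries P))"
    unfolding tagged_entries_def using subseq_concat_map[OF P'(1), of fst] by (rule subseq_map)
  ultimately show ?thesis unfolding contains_def by blast
qed

definition tag :: "(nat \<Rightarrow> nat) \<Rightarrow> bool \<Rightarrow> nat list \<Rightarrow> tagged_block" where
  "tag run sg p = (map (\<lambda>v. (v, run v)) p, sg)"

definition tag_segments ::
  "(nat \<Rightarrow> nat) \<Rightarrow> (nat list \<Rightarrow> nat list list \<times> bool) \<Rightarrow> nat list list \<Rightarrow> tagged_block list" where
  "tag_segments run D segs = concat (map (\<lambda>s. map (tag run (snd (D s))) (fst (D s))) segs)"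

lemma block_label_tag: "block_label (tag run sg p) = (std p, map run p, sg)"
  unfolding block_label_def tag_def by (simp add: comp_def)

lemma blocks_compatible_tag:
  assumes "mono run" "\<forall>x\<in>set p. \<forall>y\<in>set q. x \<noteq> y \<and> (run x = run y \<longrightarrow> (x < y \<longleftrightarrow> sg))"
  shows "blocks_compatible (tag run sg p) (tag run sg' q)"
  unfolding blocks_compatible_def tag_def
proof (clarsimp)
  fix x y assume "x \<in> set p" "y \<in> set q"
  with assms(2) have "x \<noteq> y" "run x = run y \<Longrightarrow> x < y \<longleftrightarrow> sg" by auto
  moreover have "x < y \<Longrightarrow> run x \<le> run y" "y < x \<Longrightarrow> run y \<le> run x"
    using assms(1) by (simp_all add: monoD)
  ultimately show "x < y \<longleftrightarrow> run_less sg (run x) (run y)"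
    unfolding run_less_def by (cases "x < y") (auto simp: nat_neq_iff)
qed

lemma sorted_wrt_blocks_compatible_tag:
  assumes "mono run" "sorted_wrt (\<lambda>p q. \<forall>x\<in>set p. \<forall>y\<in>set q. if sg then x < y else y < x) ps"
  shows "sorted_wrt blocks_compatible (map (tag run sg) ps)"
  unfolding sorted_wrt_map using assms(2)
proof (rule sorted_wrt_mono_rel[rotated])
  have "x \<noteq> y \<and> (x < y \<longleftrightarrow> sg)" if "if sg then x < y else y < x" for x y :: nat
    using that by (cases sg) auto
  then show "blocks_compatible (tag run sg p) (tag run sg q)"
    if "\<forall>x\<in>set p. \<forall>y\<in>set q. if sg then x < y else y < x" for p q
    using that by (intro blocks_compatible_tag[OF assms(1)]) blast
qed

lemma sorted_wrt_concat:
  "sorted_wrt R (concat xss) \<longleftrightarrow>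
     (\<forall>xs\<in>set xss. sorted_wrt R xs) \<and> sorted_wrt (\<lambda>xs ys. \<forall>x\<in>set xs. \<forall>y\<in>set ys. R x y) xss"
  by (induction xss) (auto simp: sorted_wrt_append)

lemma tagged_entries_tag_segments:
  assumes "\<And>s. s \<in> set segs \<Longrightarrow> monotone_pieces k s (D s)"
  shows "map fst (tagged_entries (tag_segments run D segs)) = concat segs"
proof -
  have "map fst (tagged_entries (map (tag run sg) ps)) = concat ps" for sg ps
    by (induction ps) (simp_all add: tag_def comp_def)
  moreover have "\<forall>s\<in>set segs. concat (fst (D s)) = s"
    using assms by (simp add: monotone_pieces_def)
  ultimately show ?thesis
    unfolding tag_segments_def by (induction segs) (simp_all add: tagged_entries_def)
qed

lemma well_tagged_tag_segments:
  assumes dist: "distinct (concat segs)" and "mono run"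
    and separated: "sorted_wrt (\<lambda>s t. \<forall>x\<in>set s. \<forall>y\<in>set t. run x \<noteq> run y) segs"
    and pieces: "\<And>s. s \<in> set segs \<Longrightarrow> monotone_pieces k s (D s)"
  shows "well_tagged (tag_segments run D segs)"
  unfolding well_tagged_def
proof
  show "sorted_wrt blocks_compatible (tag_segments run D segs)"
    unfolding tag_segments_def sorted_wrt_concat
  proof
    show "\<forall>bs\<in>set (map (\<lambda>s. map (tag run (snd (D s))) (fst (D s))) segs). sorted_wrt blocks_compatible bs"
      using pieces sorted_wrt_blocks_compatible_tag[OF \<open>mono run\<close>] by (simp add: monotone_pieces_def)
    have compat_across: "blocks_compatible (tag run (snd (D s)) p) (tag run (snd (D t)) q)"
      if "\<forall>x\<in>set s. \<forall>y\<in>set t. run x \<noteq> run y" "s \<in> set segs" "t \<in> set segs"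
        "p \<in> set (fst (D s))" "q \<in> set (fst (D t))" for s t p q
    proof (intro blocks_compatible_tag[OF \<open>mono run\<close>] ballI)
      fix x y assume "x \<in> set p" "y \<in> set q"
      moreover have "concat (fst (D s)) = s" "concat (fst (D t)) = t"
        using pieces that(2,3) by (simp_all add: monotone_pieces_def)
      ultimately have "x \<in> set s" "y \<in> set t"
        using that(4,5) by (metis UN_I set_concat)+
      then have "run x \<noteq> run y"
        using that(1) by blast
      then show "x \<noteq> y \<and> (run x = run y \<longrightarrow> (x < y \<longleftrightarrow> snd (D s)))" by auto
    qed
    have "sorted_wrt (\<lambda>s t. \<forall>p\<in>set (fst (D s)). \<forall>q\<in>set (fst (D t)).
        blocks_compatible (tag run (snd (D s)) p) (tag run (snd (D t)) q)) segs"
      using separated by (rule sorted_wrt_mono_rel[rotated]) (auto intro: compat_across)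
    then show "sorted_wrt (\<lambda>bs cs. \<forall>b\<in>set bs. \<forall>c\<in>set cs. blocks_compatible b c)
        (map (\<lambda>s. map (tag run (snd (D s))) (fst (D s))) segs)"
      by (simp add: sorted_wrt_map)
  qed
  show "distinct (map fst (tagged_entries (tag_segments run D segs)))"
    using dist tagged_entries_tag_segments[OF pieces] by simp
qed

definition bounded_labels :: "nat \<Rightarrow> nat \<Rightarrow> (nat list \<times> nat list \<times> bool) set" where
  "bounded_labels k B = {\<sigma>. set \<sigma> \<subseteq> {..<k} \<and> length \<sigma> \<le> k} \<times> {rs. set rs \<subseteq> {..B} \<and> length rs \<le> k} \<times> UNIV"

lemma finite_bounded_labels: "finite (bounded_labels k B)"
  unfolding bounded_labels_def by (intro finite_cartesian_product finite_lists_length_le) simp_all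

section \<open>Colour changes and alternations\<close>

fun changes :: "'a list \<Rightarrow> nat" where
  "changes (x # y # zs) = (if x = y then 0 else 1) + changes (y # zs)"
| "changes _ = 0"

fun alternation :: "'a \<Rightarrow> 'a \<Rightarrow> nat \<Rightarrow> 'a list" where
  "alternation x y 0 = []"
| "alternation x y (Suc n) = x # alternation y x n"

lemma changes_Cons: "changes (x # ys) = (if ys \<noteq> [] \<and> x \<noteq> hd ys then 1 else 0) + changes ys"
  by (cases ys) auto

lemma changes_append: "xs \<noteq> [] \<Longrightarrow> changes (xs @ ys) = changes xs + changes (last xs # ys)"
  by (induction xs rule: changes.induct) (auto simp: changes_Cons)

lemma changes_prefix_le: "changes xs \<le> changes (xs @ ys)"
  by (cases "xs = []") (simp_all add: changes_append)

lemma changes_take_mono: "m \<le> n \<Longrightarrow> changes (take m xs) \<le> changes (take n xs)"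
  by (metis changes_prefix_le le_add_diff_inverse take_add)

lemma changes_pos: "x \<noteq> last (x # ys) \<Longrightarrow> 0 < changes (x # ys)"
proof (induction ys arbitrary: x)
  case (Cons y ys)
  then show ?case by (cases "x = y") auto
qed simp

lemma length_alternation [simp]: "length (alternation x y n) = n"
  by (induction n arbitrary: x y) auto

lemma alternation_nth: "i < n \<Longrightarrow> alternation x y n ! i = (if even i then x else y)"
  by (induction n arbitrary: x y i) (auto simp: nth_Cons split: nat.split)

lemma alternation_prefix: "m \<le> n \<Longrightarrow> prefix (alternation x y m) (alternation x y n)"
proof (induction m arbitrary: x y n)
  case (Suc m)
  then obtain n' where "n = Suc n'" "m \<le> n'" by (cases n) auto
  then show ?case using Suc.IH by simp
qed simp

lemma subseq_alternation_two_letters: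
  "x \<noteq> y \<Longrightarrow> set (x # u) \<subseteq> {x, y} \<Longrightarrow> subseq (alternation x y (Suc (changes (x # u)))) (x # u)"
proof (induction u arbitrary: x y)
  case (Cons z u)
  show ?case
  proof (cases "z = x")
    case True
    then show ?thesis using Cons by (simp add: list_emb_Cons)
  next
    case False
    then have "z = y" using Cons.prems(2) by auto
    then show ?thesis using Cons.IH[of y x] Cons.prems by auto
  qed
qed simp

lemma changes_le_sum_pair_changes:
  "finite A \<Longrightarrow> set w \<subseteq> A \<Longrightarrow> changes w \<le> (\<Sum>p\<in>A \<times> A. changes (filter (\<lambda>c. c = fst p \<or> c = snd p) w))"
proof (induction w rule: changes.induct)
  case (1 x y zs)
  let ?f = "\<lambda>p w. changes (filter (\<lambda>c. c = fst p \<or> c = snd p) w)"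
  have step: "?f p (y # zs) + (if p = (x, y) \<and> x \<noteq> y then 1 else 0) \<le> ?f p (x # y # zs)" for p
    by (cases p) (auto simp: changes_Cons)
  have "changes (x # y # zs) \<le> (\<Sum>p\<in>A \<times> A. ?f p (y # zs)) + (if x = y then 0 else 1)"
    using "1" by simp
  also have "\<dots> = (\<Sum>p\<in>A \<times> A. ?f p (y # zs) + (if p = (x, y) \<and> x \<noteq> y then 1 else 0))"
    using "1.prems" by (simp add: sum.distrib)
  also have "\<dots> \<le> (\<Sum>p\<in>A \<times> A. ?f p (x # y # zs))"
    by (intro sum_mono step)
  finally show ?case .
qed simp_all

lemma changes_constant: "set xs \<subseteq> {x} \<Longrightarrow> changes xs = 0"
  by (induction xs rule: changes.induct) auto

lemma long_alternation_of_many_changes: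
  assumes "finite A" "set w \<subseteq> A" "card A * card A * K < changes w"
  shows "\<exists>x y. x \<noteq> y \<and> subseq (alternation x y (Suc K)) w"
proof -
  let ?u = "\<lambda>p. filter (\<lambda>c. c = fst p \<or> c = snd p) w"
  obtain p where p: "p \<in> A \<times> A" "K < changes (?u p)"
  proof (rule ccontr)
    assume "\<not> thesis"
    with that have "changes (?u p) \<le> K" if "p \<in> A \<times> A" for p
      using \<open>p \<in> A \<times> A\<close> not_le by blast
    then have "(\<Sum>p\<in>A \<times> A. changes (?u p)) \<le> card (A \<times> A) * K"
      using sum_bounded_above[of "A \<times> A" "\<lambda>p. changes (?u p)" K] by simp
    then show False
      using changes_le_sum_pair_changes[OF assms(1,2)] assms(3) by (simp add: card_cartesian_product)
  qed
  then obtain x u where u: "?u p = x # u"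
    by (cases "?u p") auto
  have "fst p \<noteq> snd p"
  proof
    assume "fst p = snd p"
    then have "set (?u p) \<subseteq> {fst p}" by auto
    then have "changes (?u p) = 0" by (rule changes_constant)
    with p(2) show False by simp
  qed
  moreover have "set (x # u) \<subseteq> {fst p, snd p}"
    unfolding u[symmetric] by auto
  moreover define y where "y = (if x = fst p then snd p else fst p)"
  ultimately have xy: "x \<noteq> y" "set (x # u) \<subseteq> {x, y}"
    by auto
  have "subseq (alternation x y (Suc K)) (alternation x y (Suc (changes (x # u))))"
    using p(2) u by (intro prefix_imp_subseq alternation_prefix) simp
  also have "subseq \<dots> (x # u)"
    using subseq_alternation_two_letters[OF xy] .
  also have "subseq (x # u) w"
    using u subseq_filter_left by metis
  finally show ?thesis using xy(1) by blast
qed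

section \<open>Segmented permutations\<close>

lemma length_inv_perm [simp]: "length (inv_perm p) = length p"
  unfolding inv_perm_def by simp

lemma inv_perm_nth:
  assumes "is_perm p" "v < length p"
  shows "inv_perm p ! v < length p \<and> p ! (inv_perm p ! v) = v"
proof -
  have "\<exists>!i. i < length p \<and> p ! i = v"
    using assms nth_eq_iff_index_eq unfolding is_perm_def
    by (metis atLeastLessThan_iff in_set_conv_nth zero_le)
  then have "(THE i. i < length p \<and> p ! i = v) < length p \<and> p ! (THE i. i < length p \<and> p ! i = v) = v"
    by (rule theI')
  then show ?thesis
    using assms(2) unfolding inv_perm_def by simp
qed

lemma inv_perm_nth_nth:
  assumes "is_perm p" "i < length p"
  shows "inv_perm p ! (p ! i) = i"
proof -
  have "p ! i < length p"
    using assms nth_mem unfolding is_perm_def by fastforce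
  then show ?thesis
    using assms inv_perm_nth nth_eq_iff_index_eq unfolding is_perm_def by metis
qed

lemma distinct_inv_perm: "is_perm p \<Longrightarrow> distinct (inv_perm p)"
  unfolding distinct_conv_nth by (metis inv_perm_nth length_inv_perm)

lemma length_le_al:
  assumes "is_perm \<sigma>" "alternating \<sigma>" "\<sigma> \<prec> inv_perm \<pi>"
  shows "length \<sigma> \<le> al \<pi>"
proof -
  let ?L = "{length \<sigma> | \<sigma>. is_perm \<sigma> \<and> alternating \<sigma> \<and> (\<sigma> \<prec> \<pi> \<or> \<sigma> \<prec> inv_perm \<pi>)}"
  have "?L \<subseteq> {..length \<pi>}"
    using contains_length length_inv_perm by fastforce
  then have "finite ?L" by (rule finite_subset) simp
  moreover have "length \<sigma> \<in> ?L" using assms by blast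
  ultimately show ?thesis unfolding al_def by (rule Max_ge)
qed

locale perm_segmentation =
  fixes \<pi> :: "nat list" and segs :: "nat list list"
  assumes perm: "is_perm \<pi>" and concat_segs: "concat segs = \<pi>"
begin

definition colour :: "nat \<Rightarrow> nat" where
  "colour v = (LEAST j. j < length segs \<and> v \<in> set (segs ! j))"

definition colour_word :: "nat list" where
  "colour_word = map colour [0..<length \<pi>]"

definition run :: "nat \<Rightarrow> nat" where
  "run v = changes (take (Suc v) colour_word)"

lemma segments_ordered_positions:
  assumes "i < j" "j < length segs" "x \<in> set (segs ! i)" "y \<in> set (segs ! j)"
  shows "\<exists>p q. p < q \<and> q < length \<pi> \<and> \<pi> ! p = x \<and> \<pi> ! q = y"
proof -
  let ?A = "concat (take j segs)" and ?B = "concat (drop j segs)"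
  have \<pi>: "\<pi> = ?A @ ?B"
    using concat_segs by (metis append_take_drop_id concat_append)
  have "x \<in> set ?A"
    using assms(1-3) nth_mem[of i "take j segs"] by auto
  then obtain p where p: "p < length ?A" "?A ! p = x" by (meson in_set_conv_nth)
  have "y \<in> set ?B"
    using assms(2,4) nth_mem[of 0 "drop j segs"] by auto
  then obtain q where q: "q < length ?B" "?B ! q = y" by (meson in_set_conv_nth)
  show ?thesis
    using p q by (intro exI[of _ p] exI[of _ "length ?A + q"]) (simp add: \<pi> nth_append)
qed

lemma segment_less_length:
  assumes "i < length segs" "x \<in> set (segs ! i)"
  shows "x < length \<pi>"
proof -
  have "x \<in> set (concat segs)" using assms nth_mem by fastforce
  then show ?thesis using perm concat_segs by (simp add: is_perm_def)
qed

lemma colour_eq: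
  assumes "i < length segs" "x \<in> set (segs ! i)"
  shows "colour x = i"
  unfolding colour_def
proof (rule Least_equality)
  fix j assume j: "j < length segs \<and> x \<in> set (segs ! j)"
  show "i \<le> j"
  proof (rule ccontr)
    assume "\<not> i \<le> j"
    then obtain p q where "p < q" "q < length \<pi>" "\<pi> ! p = x" "\<pi> ! q = x"
      using segments_ordered_positions[of j i x x] assms j by auto
    then show False
      using perm nth_eq_iff_index_eq unfolding is_perm_def by fastforce
  qed
qed (use assms in simp)

lemma colour_segment:
  assumes "x < length \<pi>"
  shows "colour x < length segs \<and> x \<in> set (segs ! colour x)"
proof -
  have "x \<in> set (concat segs)"
    using assms perm concat_segs by (simp add: is_perm_def)
  then obtain s where "s \<in> set segs" "x \<in> set s" by auto
  then obtain i where "i < length segs" "x \<in> set (segs ! i)"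
    by (auto simp: in_set_conv_nth)
  then show ?thesis using colour_eq by simp
qed

lemma colour_less_imp_inv_perm_less:
  assumes "x < length \<pi>" "y < length \<pi>" "colour x < colour y"
  shows "inv_perm \<pi> ! x < inv_perm \<pi> ! y"
proof -
  obtain p q where "p < q" "q < length \<pi>" "\<pi> ! p = x" "\<pi> ! q = y"
    using segments_ordered_positions[OF assms(3)] colour_segment assms(1,2) by blast
  then show ?thesis using inv_perm_nth_nth[OF perm] by auto
qed

lemma mono_run: "mono run"
  by (rule monoI) (simp add: run_def changes_take_mono)

lemma run_less_if_colour_ne:
  assumes "u < v" "v < length \<pi>" "colour u \<noteq> colour v"
  shows "run u < run v"
proof -
  let ?X = "take (Suc u) colour_word" and ?Y = "drop (Suc u) (take (Suc v) colour_word)"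
  have split: "take (Suc v) colour_word = ?X @ ?Y"
    using assms(1) by (metis Suc_le_mono append_take_drop_id less_imp_le min.absorb1 take_take)
  have "?X \<noteq> []" "?Y \<noteq> []"
    using assms(1,2) by (simp_all add: colour_word_def, fastforce)
  have "last ?X = colour u" "last (?X @ ?Y) = colour v"
    using assms(1,2) by (simp_all add: colour_word_def take_Suc_conv_app_nth flip: split)
  then have "0 < changes (last ?X # ?Y)"
    using \<open>?Y \<noteq> []\<close> assms(3) by (intro changes_pos) simp
  moreover have "run v = run u + changes (last ?X # ?Y)"
    unfolding run_def arg_cong[OF split, of changes] using \<open>?X \<noteq> []\<close> by (rule changes_append)
  ultimately show ?thesis by simp
qed

lemma run_le_changes: "run v \<le> changes colour_word"
  unfolding run_def by (metis append_take_drop_id changes_prefix_le)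

lemma segments_run_separated: "sorted_wrt (\<lambda>s t. \<forall>x\<in>set s. \<forall>y\<in>set t. run x \<noteq> run y) segs"
  unfolding sorted_wrt_iff_nth_less
proof (intro allI impI ballI)
  fix i j x y assume ij: "i < j" "j < length segs" and x: "x \<in> set (segs ! i)" and y: "y \<in> set (segs ! j)"
  have "colour x = i" "colour y = j"
    using ij x y colour_eq by auto
  moreover have "x < length \<pi>" "y < length \<pi>"
    using segment_less_length ij x y by (meson order.strict_trans)+
  ultimately show "run x \<noteq> run y"
    using ij(1) run_less_if_colour_ne[of x y] run_less_if_colour_ne[of y x]
    by (cases x y rule: linorder_cases) auto
qed

lemma alternation_in_colour_word_imp_al:
  assumes "lo < hi" "subseq (alternation hi lo K) colour_word"
  shows "K \<le> al \<pi>"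
proof -
  obtain vs where vs: "subseq vs [0..<length \<pi>]" "alternation hi lo K = map colour vs"
    using assms(2) unfolding colour_word_def by (erule subseq_mapE)
  have len: "length vs = K" using vs(2) by (metis length_alternation length_map)
  have vs_bound: "v < length \<pi>" if "v \<in> set vs" for v
    using list_emb_set[OF vs(1) that] by auto
  let ?ys = "map ((!) (inv_perm \<pi>)) vs"
  have "subseq ?ys (inv_perm \<pi>)"
    using subseq_map[OF vs(1)] by (metis length_inv_perm map_nth)
  then have sub: "subseq ?ys (inv_perm \<pi>)" and "distinct ?ys"
    using subseq_distinct distinct_inv_perm[OF perm] by blast+
  define \<sigma> where "\<sigma> = std ?ys"
  have iso: "order_iso ?ys \<sigma>" unfolding \<sigma>_def by (rule order_iso_std)
  have "alternating \<sigma>"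
    unfolding alternating_def
  proof (intro allI impI)
    fix i j assume i: "i < length \<sigma>" and j: "j < length \<sigma>" and "even i \<and> odd j"
    then have "colour (vs ! i) = hi" "colour (vs ! j) = lo"
      using vs(2) alternation_nth[of _ K hi lo] len by (simp_all add: \<sigma>_def)
    then have "?ys ! j < ?ys ! i"
      using colour_less_imp_inv_perm_less vs_bound i j len assms(1) by (simp add: \<sigma>_def)
    then show "\<sigma> ! j < \<sigma> ! i"
      using iso i j unfolding order_iso_def by (simp add: \<sigma>_def)
  qed
  moreover have "\<sigma> \<prec> inv_perm \<pi>"
    unfolding contains_def using sub order_iso_sym[OF iso] by blast
  moreover have "is_perm \<sigma>" "length \<sigma> = K"
    using is_perm_std[OF \<open>distinct ?ys\<close>] len by (simp_all add: \<sigma>_def)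
  ultimately show ?thesis using length_le_al by metis
qed

lemma changes_colour_word_le:
  assumes "al \<pi> < K" "length segs < K"
  shows "changes colour_word \<le> K * K * K"
proof (rule ccontr)
  assume "\<not> ?thesis"
  moreover have "set colour_word \<subseteq> {..<length segs}"
    using colour_segment by (auto simp: colour_word_def)
  moreover have "card {..<length segs} * card {..<length segs} * K \<le> K * K * K"
    using assms(2) by (simp add: mult_le_mono)
  ultimately obtain x y where "x \<noteq> y" "subseq (alternation x y (Suc K)) colour_word"
    using long_alternation_of_many_changes[of "{..<length segs}" colour_word K] by fastforce
  then obtain hi lo where "lo < hi" "subseq (alternation hi lo K) colour_word"
  proof (cases "y < x")
    case True
    then show ?thesis
      using that \<open>subseq (alternation x y (Suc K)) colour_word\<close>
      by (meson alternation_prefix le_SucI order_refl prefix_imp_subseq subseq_order.trans)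
  next
    case False
    have "subseq (alternation y x K) (alternation x y (Suc K))" by auto
    then show ?thesis
      using that False \<open>x \<noteq> y\<close> \<open>subseq (alternation x y (Suc K)) colour_word\<close>
      by (meson linorder_neqE_nat subseq_order.trans)
  qed
  then show False using alternation_in_colour_word_imp_al assms(1) by fastforce
qed

end

section \<open>Well partial order\<close>

lemma tagged_encoding_exists:
  assumes "2 \<le> k" "is_perm \<pi>" "al \<pi> < K" "s_k k \<pi> < enat K"
  shows "\<exists>P. well_tagged P \<and> map fst (tagged_entries P) = \<pi> \<and>
    set (map block_label P) \<subseteq> bounded_labels k (K * K * K)"
proof -
  obtain segs where segs: "length segs = greedy_count (length \<pi>) k \<pi>" "concat segs = \<pi>"
    "\<forall>s\<in>set segs. std s \<in> H_plus k \<union> H_minus k"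
    using greedy_partition[OF assms(1) order_refl] by blast
  interpret perm_segmentation \<pi> segs
    using assms(2) segs(2) by unfold_locales
  have "length segs < K"
    using assms(1,4) segs(1) by (simp add: s_k_def)
  have runs_bounded: "run v \<le> K * K * K" for v
    using run_le_changes[of v] changes_colour_word_le[OF assms(3) \<open>length segs < K\<close>] by (rule le_trans)
  have dist: "distinct (concat segs)"
    using perm concat_segs by (simp add: is_perm_def)
  have "\<exists>d. monotone_pieces k s d" if "s \<in> set segs" for s
    using H_imp_monotone_pieces dist segs(3) that by (simp add: distinct_concat_iff)
  then obtain D where D: "\<And>s. s \<in> set segs \<Longrightarrow> monotone_pieces k s (D s)"
    using bchoice[of "set segs" "monotone_pieces k"] by blast
  let ?P = "tag_segments run D segs"
  have "well_tagged ?P"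
    using well_tagged_tag_segments[OF dist mono_run segments_run_separated D] .
  moreover have "map fst (tagged_entries ?P) = \<pi>"
    using tagged_entries_tag_segments[OF D] concat_segs by simp
  moreover have "block_label b \<in> bounded_labels k (K * K * K)" if b_in: "b \<in> set ?P" for b
  proof -
    obtain s p where s: "s \<in> set segs" and p: "p \<in> set (fst (D s))" and b: "b = tag run (snd (D s)) p"
      using b_in unfolding tag_segments_def by auto
    have "length p < k"
      using D[OF s] p by (simp add: monotone_pieces_def)
    then have "set (std p) \<subseteq> {..<k}"
      using std_less_length[of p] by auto
    then show ?thesis
      using \<open>length p < k\<close> runs_bounded by (auto simp: b block_label_tag bounded_labels_def)
  qed
  ultimately show ?thesis by auto
qed

lemma no_infinite_descending_chain:
  "\<not> (\<exists>f. \<forall>i. is_perm (f i) \<and> f (Suc i) \<prec> f i \<and> f (Suc i) \<noteq> f i)"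
proof
  assume "\<exists>f. \<forall>i. is_perm (f i) \<and> f (Suc i) \<prec> f i \<and> f (Suc i) \<noteq> f i"
  then obtain f where f: "\<And>i. is_perm (f i) \<and> f (Suc i) \<prec> f i \<and> f (Suc i) \<noteq> f i" by blast
  have shrink: "length (f (Suc i)) < length (f i)" for i
    using f[of i] f[of "Suc i"] contains_length perm_contains_same_length_eq by (metis le_neq_implies_less)
  have "length (f i) + i \<le> length (f 0)" for i
  proof (induction i)
    case (Suc i)
    then show ?case using shrink[of i] by simp
  qed simp
  from this[of "Suc (length (f 0))"] show False by simp
qed

lemma bounded_perms_good_pair:
  fixes f :: "nat \<Rightarrow> nat list"
  assumes "2 \<le> k" and f: "\<And>i. is_perm (f i) \<and> al (f i) < K \<and> s_k k (f i) < enat K"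
  shows "\<exists>i j. i < j \<and> f i \<prec> f j"
proof -
  have "\<forall>i. \<exists>P. well_tagged P \<and> map fst (tagged_entries P) = f i \<and>
      set (map block_label P) \<subseteq> bounded_labels k (K * K * K)"
    using tagged_encoding_exists[OF assms(1)] f by blast
  then obtain P where P: "\<And>i. well_tagged (P i) \<and> map fst (tagged_entries (P i)) = f i \<and>
      set (map block_label (P i)) \<subseteq> bounded_labels k (K * K * K)"
    by (metis choice)
  have "\<not> bad_word_seq (bounded_labels k (K * K * K)) (\<lambda>i. map block_label (P i))"
    by (rule higman[OF finite_bounded_labels])
  then obtain i j where "i < j" "subseq (map block_label (P i)) (map block_label (P j))"
    using P unfolding bad_word_seq_def by blast
  then have "map fst (tagged_entries (P i)) \<prec> map fst (tagged_entries (P j))"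
    using P well_tagged_contains by blast
  then show ?thesis using \<open>i < j\<close> P by auto
qed

lemma no_infinite_antichain:
  "\<not> (\<exists>f :: nat \<Rightarrow> nat list. (\<forall>i. f i \<in> {\<pi>. is_perm \<pi> \<and> al \<pi> < K \<and> s_k k \<pi> < enat K}) \<and> inj f \<and>
      (\<forall>i j. i \<noteq> j \<longrightarrow> \<not> f i \<prec> f j))"
proof (cases "2 \<le> k")
  case True
  show ?thesis
  proof (intro notI, elim exE conjE)
    fix f :: "nat \<Rightarrow> nat list"
    assume "\<forall>i. f i \<in> {\<pi>. is_perm \<pi> \<and> al \<pi> < K \<and> s_k k \<pi> < enat K}"
      and antichain: "\<forall>i j. i \<noteq> j \<longrightarrow> \<not> f i \<prec> f j"
    then obtain i j where "i < j" "f i \<prec> f j"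
      using bounded_perms_good_pair[OF True, of f K] by auto
    then show False using antichain by auto
  qed
next
  case False
  then show ?thesis by (simp add: s_k_def)
qed

theorem mainTheorem7:
  fixes k K :: nat
  shows "wpo_on (\<prec>) {\<pi>. is_perm \<pi> \<and> al \<pi> < K \<and> s_k k \<pi> < enat K}"
  unfolding wpo_on_def
  using contains_refl contains_trans contains_antisym no_infinite_descending_chain no_infinite_antichain
  by blast

end
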